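(* Let $G$ be a connected graph with $n$ vertices and $m$ edges. If either $n=13$ and $24\le m\le 78$, or $n=14$ and $23\le m\le 91$, then $\frac{q(G)}{R(G)}<\frac{n}{\sqrt{n-1}}$.
   Context: All graphs are finite and simple. For a vertex $u$, $d(u)$ is its degree. The Randić index is $R(G)=\sum_{\{u,v\}\in E(G)} \frac{1}{\sqrt{d(u)d(v)}}$. The signless Laplacian is $Q=D+A$ ($D$ the diagonal degree matrix, $A$ the adjacency matrix), and $q(G)$ is its largest eigenvalue. *)

theory Defs
  imports Complex_Main "Jordan_Normal_Form.Char_Poly"
begin

definition simple_graph :: "nat \<Rightarrow> (nat \<Rightarrow> nat \<Rightarrow> bool) \<Rightarrow> bool" where
  "simple_graph n E \<longleftrightarrow> (\<forall>u v. E u v \<longrightarrow> u < n \<and> v < n \<and> u \<noteq> v \<and> E v u)"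

definition edges :: "nat \<Rightarrow> (nat \<Rightarrow> nat \<Rightarrow> bool) \<Rightarrow> nat set set" where
  "edges n E = {{u, v} | u v. u < n \<and> v < n \<and> E u v}"

definition num_edges :: "nat \<Rightarrow> (nat \<Rightarrow> nat \<Rightarrow> bool) \<Rightarrow> nat" where
  "num_edges n E = card (edges n E)"

definition connected_graph :: "nat \<Rightarrow> (nat \<Rightarrow> nat \<Rightarrow> bool) \<Rightarrow> bool" where
  "connected_graph n E \<longleftrightarrow> n \<ge> 1 \<and> (\<forall>u<n. \<forall>v<n. E\<^sup>*\<^sup>* u v)"

definition deg :: "nat \<Rightarrow> (nat \<Rightarrow> nat \<Rightarrow> bool) \<Rightarrow> nat \<Rightarrow> nat" where
  "deg n E u = card {v. v < n \<and> E u v}"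

definition randic :: "nat \<Rightarrow> (nat \<Rightarrow> nat \<Rightarrow> bool) \<Rightarrow> real" where
  "randic n E = (\<Sum>e\<in>edges n E. 1 / sqrt (\<Prod>u\<in>e. real (deg n E u)))"

definition adj_mat :: "nat \<Rightarrow> (nat \<Rightarrow> nat \<Rightarrow> bool) \<Rightarrow> real mat" where
  "adj_mat n E = mat n n (\<lambda>(i, j). if E i j then 1 else 0)"

definition deg_mat :: "nat \<Rightarrow> (nat \<Rightarrow> nat \<Rightarrow> bool) \<Rightarrow> real mat" where
  "deg_mat n E = mat n n (\<lambda>(i, j). if i = j then real (deg n E i) else 0)"

definition signless_laplacian :: "nat \<Rightarrow> (nat \<Rightarrow> nat \<Rightarrow> bool) \<Rightarrow> real mat" where
  "signless_laplacian n E = deg_mat n E + adj_mat n E"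

definition q_index :: "nat \<Rightarrow> (nat \<Rightarrow> nat \<Rightarrow> bool) \<Rightarrow> real" where
  "q_index n E = Max {k. eigenvalue (signless_laplacian n E) k}"

end

theory Submission
  imports Defs "Jordan_Normal_Form.Spectral_Radius"
begin

text \<open>
  If x is an eigenvector of Q for k and u
  maximises |x_u| / d_u, the eigen-equation at u gives (k - d_u) d_u \<le> \<Sum>_{v~u} d_v;
  since this neighbour sum is at most d_u (n - 1) and at most 2m - n + 1, one gets
  q \<le> 2m/(n-1) + n - 2. For R, expanding (1/\<surd>d_u - 1/\<surd>(n-1))(1/\<surd>d_v - 1/\<surd>(n-1)) \<ge> 0
  bounds every edge term from below by vertex terms; double counting and the chord bound
  for \<surd> on [1, n-1] give R \<ge> (n + (2m-n)/(\<surd>(n-1)+1))/\<surd>(n-1) - m/(n-1). For m \<ge> n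
  the quotient of the two bounds is below n/\<surd>(n-1) exactly when
  \<surd>(n-1)(3(n-1)+1) < (n-1)(n-2), which holds for n \<ge> 13. The maximum defining q exists
  because Q is real symmetric, so its complex eigenvalues are real.
\<close>

lemma edges_subset_Pow: "edges n E \<subseteq> Pow {..<n}"
  by (auto simp: edges_def)

lemma finite_edges: "finite (edges n E)"
  by (rule finite_subset[OF edges_subset_Pow]) auto

lemma card_edge:
  assumes "simple_graph n E" and "e \<in> edges n E"
  shows "card e = 2"
  using assms unfolding edges_def simple_graph_def by auto

lemma card_incident_edges:
  assumes sg: "simple_graph n E" and u: "u < n"
  shows "card {e\<in>edges n E. u \<in> e} = deg n E u"
proof -
  have "bij_betw (\<lambda>v. {u, v}) {v. v < n \<and> E u v} {e\<in>edges n E. u \<in> e}"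
  proof (rule bij_betwI')
    fix x y assume "x \<in> {v. v < n \<and> E u v}" "y \<in> {v. v < n \<and> E u v}"
    then have "x \<noteq> u" "y \<noteq> u" using sg unfolding simple_graph_def by auto
    then show "({u, x} = {u, y}) = (x = y)" by (auto simp: doubleton_eq_iff)
  next
    fix x assume "x \<in> {v. v < n \<and> E u v}"
    then show "{u, x} \<in> {e \<in> edges n E. u \<in> e}" using u by (auto simp: edges_def)
  next
    fix e assume "e \<in> {e \<in> edges n E. u \<in> e}"
    then obtain a b where e: "e = {a, b}" "a < n" "b < n" "E a b" "u \<in> e"
      by (auto simp: edges_def)
    show "\<exists>x\<in>{v. v < n \<and> E u v}. e = {u, x}"
    proof (cases "u = a")
      case True
      then show ?thesis using e by auto
    next
      case False
      then have "u = b" using e by auto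
      then show ?thesis using e sg unfolding simple_graph_def by (intro bexI[of _ a]) auto
    qed
  qed
  then show ?thesis unfolding deg_def by (simp add: bij_betw_same_card)
qed

lemma sum_edges_sum_vertices:
  assumes sg: "simple_graph n E"
  shows "(\<Sum>e\<in>edges n E. \<Sum>u\<in>e. f u) = (\<Sum>u<n. real (deg n E u) * f u)"
proof -
  have "(\<Sum>e\<in>edges n E. \<Sum>u\<in>e. f u) = (\<Sum>e\<in>edges n E. \<Sum>u<n. if u \<in> e then f u else 0)"
  proof (rule sum.cong[OF refl])
    fix e assume "e \<in> edges n E"
    then have "e \<subseteq> {..<n}" using edges_subset_Pow by auto
    then show "(\<Sum>u\<in>e. f u) = (\<Sum>u<n. if u \<in> e then f u else 0)"
      by (simp add: sum.If_cases inf.absorb2)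
  qed
  also have "\<dots> = (\<Sum>u<n. \<Sum>e\<in>edges n E. if u \<in> e then f u else 0)"
    by (rule sum.swap)
  also have "\<dots> = (\<Sum>u<n. real (card {e\<in>edges n E. u \<in> e}) * f u)"
    by (simp add: sum.inter_filter[symmetric, OF finite_edges])
  also have "\<dots> = (\<Sum>u<n. real (deg n E u) * f u)"
    by (simp add: card_incident_edges[OF sg])
  finally show ?thesis .
qed

lemma sum_deg:
  assumes sg: "simple_graph n E"
  shows "(\<Sum>u<n. real (deg n E u)) = 2 * real (num_edges n E)"
proof -
  have "(\<Sum>u<n. real (deg n E u)) = (\<Sum>e\<in>edges n E. real (card e))"
    using sum_edges_sum_vertices[OF sg, of "\<lambda>_. 1"] by simp
  also have "\<dots> = (\<Sum>e\<in>edges n E. 2)"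
    using card_edge[OF sg] by (intro sum.cong) auto
  finally show ?thesis by (simp add: num_edges_def)
qed

lemma deg_le:
  assumes sg: "simple_graph n E" and u: "u < n"
  shows "deg n E u \<le> n - 1"
proof -
  have "{v. v < n \<and> E u v} \<subseteq> {..<n} - {u}" using sg unfolding simple_graph_def by auto
  then have "deg n E u \<le> card ({..<n} - {u})" unfolding deg_def by (intro card_mono) auto
  then show ?thesis using u by simp
qed

lemma deg_ge_1:
  assumes sg: "simple_graph n E" and c: "connected_graph n E" and n: "n \<ge> 2" and u: "u < n"
  shows "deg n E u \<ge> 1"
proof -
  obtain v where v: "v < n" "v \<noteq> u"
    using n by (cases "u = 0") (auto intro: that[of 0] that[of 1])
  have "E\<^sup>*\<^sup>* u v" using c u v unfolding connected_graph_def by auto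
  then obtain w where "E u w" using v(2) by (metis converse_rtranclpE)
  then have "w \<in> {v. v < n \<and> E u v}" using sg unfolding simple_graph_def by auto
  then have "card {v. v < n \<and> E u v} > 0" by (auto simp: card_gt_0_iff)
  then show ?thesis unfolding deg_def by simp
qed

lemma sum_adjacent_indicator:
  "(\<Sum>j<n. if E u j then (1::real) else 0) = real (deg n E u)"
proof -
  have "(\<Sum>j<n. if E u j then (1::real) else 0) = real (card {j\<in>{..<n}. E u j})"
    by (simp add: sum.inter_filter[symmetric])
  also have "{j\<in>{..<n}. E u j} = {v. v < n \<and> E u v}" by auto
  finally show ?thesis by (simp add: deg_def)
qed

lemma inv_sqrt_mult_ge:
  fixes a b N :: real
  assumes "1 \<le> a" "a \<le> N" "1 \<le> b" "b \<le> N"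
  shows "1 / sqrt (a * b) \<ge> (1 / sqrt N / sqrt a - 1 / N / 2) + (1 / sqrt N / sqrt b - 1 / N / 2)"
proof -
  define x y c where "x = 1 / sqrt a" and "y = 1 / sqrt b" and "c = 1 / sqrt N"
  have "c \<le> x" "c \<le> y" unfolding c_def x_def y_def using assms
    by (auto intro!: divide_left_mono)
  then have "c * x + c * y - c * c \<le> x * y"
    using mult_nonneg_nonneg[of "x - c" "y - c"] by (simp add: algebra_simps)
  moreover have "c * c = 1 / N" unfolding c_def using assms by simp
  moreover have "1 / sqrt (a * b) = x * y" unfolding x_def y_def by (simp add: real_sqrt_mult)
  moreover have "c * x = 1 / sqrt N / sqrt a" "c * y = 1 / sqrt N / sqrt b"
    unfolding x_def y_def c_def by simp_all
  ultimately show ?thesis by simp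
qed

lemma sqrt_ge_chord:
  fixes d N :: real
  assumes "1 \<le> d" "d \<le> N"
  shows "sqrt d \<ge> 1 + (d - 1) / (sqrt N + 1)"
proof -
  define t where "t = sqrt d"
  have t: "1 \<le> t" "t \<le> sqrt N" "d = t * t" unfolding t_def using assms by auto
  have "d - 1 = (t - 1) * (t + 1)" using t(3) by (simp add: algebra_simps)
  also have "\<dots> \<le> (t - 1) * (sqrt N + 1)" using t by (intro mult_left_mono) auto
  moreover have "sqrt N + 1 > 0" using assms by (simp add: add_nonneg_pos)
  ultimately have "(d - 1) / (sqrt N + 1) \<le> t - 1"
    by (simp add: pos_divide_le_eq)
  then show ?thesis unfolding t_def by simp
qed

lemma randic_ge_sum_sqrt_deg:
  fixes N :: real
  assumes sg: "simple_graph n E"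
    and deg: "\<And>u. u < n \<Longrightarrow> 1 \<le> deg n E u \<and> real (deg n E u) \<le> N"
  shows "randic n E \<ge> (\<Sum>u<n. sqrt (deg n E u)) / sqrt N - real (num_edges n E) / N"
proof -
  define d where "d u = real (deg n E u)" for u
  define \<phi> where "\<phi> u = 1 / sqrt N / sqrt (d u) - 1 / N / 2" for u
  have "(\<Sum>e\<in>edges n E. \<Sum>u\<in>e. \<phi> u) \<le> randic n E"
    unfolding randic_def
  proof (rule sum_mono)
    fix e assume "e \<in> edges n E"
    then obtain a b where e: "e = {a, b}" "a < n" "b < n" "a \<noteq> b"
      using sg by (auto simp: edges_def simple_graph_def)
    have "\<phi> a + \<phi> b \<le> 1 / sqrt (d a * d b)" unfolding \<phi>_def d_def
      by (rule inv_sqrt_mult_ge) (use deg e in auto)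
    then show "(\<Sum>u\<in>e. \<phi> u) \<le> 1 / sqrt (\<Prod>u\<in>e. real (deg n E u))"
      using e by (simp add: d_def)
  qed
  also have "(\<Sum>e\<in>edges n E. \<Sum>u\<in>e. \<phi> u) = (\<Sum>u<n. sqrt (d u) / sqrt N - d u / N / 2)"
    unfolding sum_edges_sum_vertices[OF sg] d_def[symmetric]
  proof (rule sum.cong[OF refl])
    fix u assume "u \<in> {..<n}"
    have "d u * (1 / sqrt N / sqrt (d u)) = d u / sqrt (d u) / sqrt N"
      by (simp add: mult.commute)
    also have "d u / sqrt (d u) = sqrt (d u)"
      using deg \<open>u \<in> {..<n}\<close> unfolding d_def by (intro real_div_sqrt) auto
    finally show "d u * \<phi> u = sqrt (d u) / sqrt N - d u / N / 2"
      unfolding \<phi>_def right_diff_distrib by simp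
  qed
  also have "\<dots> = (\<Sum>u<n. sqrt (d u)) / sqrt N - (\<Sum>u<n. d u) / N / 2"
    by (simp add: sum_subtractf sum_divide_distrib)
  finally show ?thesis unfolding d_def sum_deg[OF sg] by simp
qed

lemma sum_sqrt_deg_ge:
  fixes N :: real
  assumes sg: "simple_graph n E"
    and deg: "\<And>u. u < n \<Longrightarrow> 1 \<le> deg n E u \<and> real (deg n E u) \<le> N"
  shows "(\<Sum>u<n. sqrt (deg n E u)) \<ge> n + (2 * real (num_edges n E) - n) / (sqrt N + 1)"
proof -
  have "(\<Sum>u<n. sqrt (deg n E u)) \<ge> (\<Sum>u<n. 1 + (real (deg n E u) - 1) / (sqrt N + 1))"
    by (intro sum_mono sqrt_ge_chord) (use deg in auto)
  also have "(\<Sum>u<n. 1 + (real (deg n E u) - 1) / (sqrt N + 1))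
      = n + ((\<Sum>u<n. real (deg n E u)) - n) / (sqrt N + 1)"
    by (simp add: sum.distrib sum_divide_distrib[symmetric] sum_subtractf)
  finally show ?thesis unfolding sum_deg[OF sg] .
qed

lemma randic_ge:
  fixes N :: real
  assumes sg: "simple_graph n E" and N: "0 \<le> N"
    and deg: "\<And>u. u < n \<Longrightarrow> 1 \<le> deg n E u \<and> real (deg n E u) \<le> N"
  shows "randic n E \<ge> (n + (2 * real (num_edges n E) - n) / (sqrt N + 1)) / sqrt N
      - real (num_edges n E) / N"
proof -
  have "(n + (2 * real (num_edges n E) - n) / (sqrt N + 1)) / sqrt N
      \<le> (\<Sum>u<n. sqrt (deg n E u)) / sqrt N"
    using sum_sqrt_deg_ge[OF sg deg] N by (simp add: divide_right_mono)
  then show ?thesis using randic_ge_sum_sqrt_deg[OF sg deg] by linarith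
qed

lemma mult_mat_vec_index_sum:
  assumes "A \<in> carrier_mat n n" "v \<in> carrier_vec n" "i < n"
  shows "(A *\<^sub>v v) $ i = (\<Sum>j<n. A $$ (i,j) * v $ j)"
  using assms by (auto simp: scalar_prod_def atLeast0LessThan)

lemma eigenvalue_of_real_imp_eigenvalue:
  assumes A: "(A :: real mat) \<in> carrier_mat n n"
    and ev: "eigenvalue (map_mat complex_of_real A) (complex_of_real k)"
  shows "eigenvalue A k"
proof -
  have "map_mat complex_of_real A \<in> carrier_mat n n" using A by simp
  then have "poly (map_poly complex_of_real (char_poly A)) (complex_of_real k) = 0"
    using ev by (simp add: eigenvalue_root_char_poly of_real_hom.char_poly_hom[OF A])
  then show ?thesis by (simp add: eigenvalue_root_char_poly[OF A])
qed

lemma symmetric_eigenvalue_real: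
  assumes A: "(A :: real mat) \<in> carrier_mat n n" and sym: "transpose_mat A = A"
    and ev: "eigenvalue (map_mat complex_of_real A) l"
  shows "Im l = 0"
proof -
  define C where "C = map_mat complex_of_real A"
  have C: "C \<in> carrier_mat n n" using A unfolding C_def by simp
  obtain v where v: "v \<in> carrier_vec n" "v \<noteq> 0\<^sub>v n" "C *\<^sub>v v = l \<cdot>\<^sub>v v"
    using ev C unfolding C_def[symmetric] eigenvalue_def eigenvector_def by auto
  have Aij: "A $$ (i, j) = A $$ (j, i)" if "i < n" "j < n" for i j
    using arg_cong[OF sym, of "\<lambda>B. B $$ (j, i)"] that A by simp
  \<comment> \<open>s = v^* A v equals l |v|^2, and it equals its own conjugate because A is real symmetric.\<close>
  define s where "s = (\<Sum>i<n. cnj (v $ i) * (\<Sum>j<n. of_real (A $$ (i, j)) * v $ j))"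
  define w where "w = (\<Sum>i<n. v $ i * cnj (v $ i))"
  have "s = (\<Sum>i<n. cnj (v $ i) * (l * v $ i))"
    unfolding s_def
  proof (intro sum.cong refl)
    fix i assume i: "i \<in> {..<n}"
    have "(C *\<^sub>v v) $ i = (\<Sum>j<n. C $$ (i, j) * v $ j)"
      using mult_mat_vec_index_sum[OF C v(1)] i by simp
    then show "cnj (v $ i) * (\<Sum>j<n. of_real (A $$ (i, j)) * v $ j) = cnj (v $ i) * (l * v $ i)"
      using v(1,3) A i unfolding C_def by simp
  qed
  also have "\<dots> = l * w"
    unfolding w_def by (simp add: sum_distrib_left mult_ac)
  finally have s: "s = l * w" .
  have "cnj s = (\<Sum>i<n. \<Sum>j<n. v $ i * of_real (A $$ (i, j)) * cnj (v $ j))"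
    unfolding s_def by (simp add: sum_distrib_left mult_ac)
  also have "\<dots> = (\<Sum>j<n. \<Sum>i<n. cnj (v $ j) * of_real (A $$ (j, i)) * v $ i)"
    by (subst sum.swap) (auto intro!: sum.cong simp: Aij mult_ac)
  also have "\<dots> = s"
    unfolding s_def by (simp add: sum_distrib_left mult_ac)
  finally have "Im s = 0" by (metis Reals_cnj_iff complex_is_Real_iff)
  obtain i where i: "i < n" "v $ i \<noteq> 0"
    using v(1,2) by (metis carrier_vecD eq_vecI index_zero_vec)
  then have "(\<Sum>i<n. (cmod (v $ i))\<^sup>2) > 0"
    by (intro sum_pos2[where i=i]) auto
  moreover have "w = of_real (\<Sum>i<n. (cmod (v $ i))\<^sup>2)"
    unfolding w_def complex_norm_square of_real_sum ..
  ultimately show ?thesis using s \<open>Im s = 0\<close> by simp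
qed

lemma symmetric_mat_has_eigenvalue:
  assumes A: "(A :: real mat) \<in> carrier_mat n n" and sym: "transpose_mat A = A" and n: "n > 0"
  shows "\<exists>k. eigenvalue A k"
proof -
  have "map_mat complex_of_real A \<in> carrier_mat n n" using A by simp
  then obtain l where l: "eigenvalue (map_mat complex_of_real A) l"
    using spectrum_non_empty[OF _ n] unfolding spectrum_def by blast
  then have "l = complex_of_real (Re l)"
    using symmetric_eigenvalue_real[OF A sym] complex_eq_iff by force
  then show ?thesis using eigenvalue_of_real_imp_eigenvalue[OF A] l by metis
qed

definition neighbour_deg_sum :: "nat \<Rightarrow> (nat \<Rightarrow> nat \<Rightarrow> bool) \<Rightarrow> nat \<Rightarrow> real" where
  "neighbour_deg_sum n E u = (\<Sum>j<n. if E u j then real (deg n E j) else 0)"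

lemma neighbour_deg_sum_le_deg_mult:
  assumes sg: "simple_graph n E" and u: "u < n"
  shows "neighbour_deg_sum n E u \<le> deg n E u * (real n - 1)"
proof -
  have "neighbour_deg_sum n E u \<le> (\<Sum>j<n. if E u j then real n - 1 else 0)"
    unfolding neighbour_deg_sum_def
    by (intro sum_mono) (use deg_le[OF sg] in \<open>fastforce simp: of_nat_diff\<close>)
  also have "\<dots> = deg n E u * (real n - 1)"
    using sum_adjacent_indicator[of E u n] by (simp add: sum.If_cases)
  finally show ?thesis .
qed

lemma neighbour_deg_sum_le_num_edges:
  assumes sg: "simple_graph n E" and deg1: "\<And>v. v < n \<Longrightarrow> 1 \<le> deg n E v" and u: "u < n"
  shows "neighbour_deg_sum n E u \<le> 2 * real (num_edges n E) - n + 1"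
proof -
  let ?d = "\<lambda>j. real (deg n E j)"
  let ?adj = "\<lambda>j. if E u j then (1::real) else 0"
  \<comment> \<open>The 2m degree units also include at least 1 for each of the n - 1 - d_u non-neighbours
    of u other than u, and d_u \<ge> 1 for u itself.\<close>
  have "\<not> E u u" using sg unfolding simple_graph_def by auto
  then have "(\<Sum>j<n. (if E u j then ?d j else 0) + (1 - ?adj j) + (if j = u then ?d u - 1 else 0))
      \<le> (\<Sum>j<n. ?d j)"
    by (intro sum_mono) (use deg1 in \<open>auto simp: Suc_le_eq\<close>)
  also have "(\<Sum>j<n. (if E u j then ?d j else 0) + (1 - ?adj j) + (if j = u then ?d u - 1 else 0))
      = neighbour_deg_sum n E u + (n - ?d u) + (?d u - 1)"
    using u sum_adjacent_indicator[of E u n]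
    by (simp add: neighbour_deg_sum_def sum.distrib sum_subtractf)
  finally show ?thesis unfolding sum_deg[OF sg] by simp
qed

lemma signless_laplacian_carrier: "signless_laplacian n E \<in> carrier_mat n n"
  by (simp add: signless_laplacian_def deg_mat_def adj_mat_def)

lemma transpose_signless_laplacian:
  assumes "simple_graph n E"
  shows "transpose_mat (signless_laplacian n E) = signless_laplacian n E"
  using assms
  by (intro eq_matI) (auto simp: signless_laplacian_def deg_mat_def adj_mat_def simple_graph_def)

lemma signless_laplacian_mult_vec_index:
  assumes x: "x \<in> carrier_vec n" and i: "i < n"
  shows "(signless_laplacian n E *\<^sub>v x) $ i
    = real (deg n E i) * x $ i + (\<Sum>j<n. if E i j then x $ j else 0)"
proof -
  have "(signless_laplacian n E *\<^sub>v x) $ i = (\<Sum>j<n. signless_laplacian n E $$ (i, j) * x $ j)"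
    by (rule mult_mat_vec_index_sum[OF signless_laplacian_carrier x i])
  also have "\<dots> = (\<Sum>j<n. (if i = j then real (deg n E i) * x $ j else 0) + (if E i j then x $ j else 0))"
    using i by (intro sum.cong) (auto simp: signless_laplacian_def deg_mat_def adj_mat_def distrib_right)
  also have "\<dots> = real (deg n E i) * x $ i + (\<Sum>j<n. if E i j then x $ j else 0)"
    using i by (simp add: sum.distrib)
  finally show ?thesis .
qed

lemma signless_laplacian_eigenvector_vertex:
  assumes sg: "simple_graph n E" and deg1: "\<And>v. v < n \<Longrightarrow> 1 \<le> deg n E v"
    and ev: "eigenvector (signless_laplacian n E) x k"
  shows "\<exists>u<n. (k - deg n E u) * deg n E u \<le> neighbour_deg_sum n E u"
proof -
  define d where "d j = real (deg n E j)" for j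
  define y where "y j = \<bar>x $ j\<bar> / d j" for j
  have x: "x \<in> carrier_vec n" "x \<noteq> 0\<^sub>v n" "signless_laplacian n E *\<^sub>v x = k \<cdot>\<^sub>v x"
    using ev signless_laplacian_carrier[of n E] unfolding eigenvector_def by auto
  obtain i where i: "i < n" "x $ i \<noteq> 0"
    using x(1,2) by (metis carrier_vecD eq_vecI index_zero_vec)
  obtain u where u: "u < n" and umax: "\<And>j. j < n \<Longrightarrow> y j \<le> y u"
  proof -
    have "Max (y ` {..<n}) \<in> y ` {..<n}" using i by (intro Max_in) auto
    then obtain u where "u < n" "y u = Max (y ` {..<n})" by auto
    then show thesis by (intro that[of u]) auto
  qed
  have d1: "1 \<le> d j" if "j < n" for j using deg1[OF that] unfolding d_def by simp
  have "0 < y i" using i d1[of i] unfolding y_def by simp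
  then have yu: "0 < y u" using umax[OF i(1)] by simp
  have "k * x $ u = d u * x $ u + (\<Sum>j<n. if E u j then x $ j else 0)"
    using signless_laplacian_mult_vec_index[OF x(1) u, of E] x u unfolding d_def by simp
  then have "\<bar>k - d u\<bar> * \<bar>x $ u\<bar> = \<bar>\<Sum>j<n. if E u j then x $ j else 0\<bar>"
    by (simp add: abs_mult[symmetric] algebra_simps)
  also have "\<dots> \<le> (\<Sum>j<n. \<bar>if E u j then x $ j else 0\<bar>)" by (rule sum_abs)
  also have "\<dots> \<le> (\<Sum>j<n. if E u j then d j * y u else 0)"
  proof (rule sum_mono)
    fix j assume j: "j \<in> {..<n}"
    have "\<bar>x $ j\<bar> = d j * y j" using d1[of j] j unfolding y_def by simp
    also have "\<dots> \<le> d j * y u" using umax[of j] j d1[of j] by simp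
    finally show "\<bar>if E u j then x $ j else 0\<bar> \<le> (if E u j then d j * y u else 0)" by simp
  qed
  also have "\<dots> = neighbour_deg_sum n E u * y u"
    unfolding neighbour_deg_sum_def sum_distrib_right d_def by (intro sum.cong) auto
  finally have "\<bar>k - d u\<bar> * d u * y u \<le> neighbour_deg_sum n E u * y u"
    using d1[OF u] unfolding y_def by (simp add: mult.assoc)
  then have "\<bar>k - d u\<bar> * d u \<le> neighbour_deg_sum n E u"
    using yu by simp
  moreover have "(k - d u) * d u \<le> \<bar>k - d u\<bar> * d u" using d1[OF u] by simp
  ultimately show ?thesis using u unfolding d_def by force
qed

lemma le_div_add_of_diff_mult_le:
  fixes k d S T N :: real
  assumes "(k - d) * d \<le> S" "S \<le> T" "S \<le> d * N" "1 \<le> d" "d \<le> N"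
  shows "k \<le> T / N + N"
\<comment> \<open>k \<le> d + S/d, and d + min T (d N) / d attains its maximum over [1, N] at d = N.\<close>
proof (cases "d * N \<le> T")
  case True
  have "(k - d) * d \<le> N * d" using assms(1,3) mult.commute[of d N] by linarith
  then have "k - d \<le> N" using assms(4) by (simp add: mult_le_cancel_right_pos)
  then have "k \<le> d + N" by simp
  moreover have "d \<le> T / N" using True assms by (simp add: le_divide_eq)
  ultimately show ?thesis by simp
next
  case False
  have N: "0 < N" using assms(4,5) by simp
  have "0 \<le> (d * N - T) * (N - d)" using False assms(5) by simp
  then have "N * (d * d + T) \<le> (T + N * N) * d" by (simp add: algebra_simps)
  then have "d * d + T \<le> (T / N + N) * d" using N by (simp add: field_simps)
  moreover have "k * d \<le> d * d + T" using assms(1,2) by (simp add: algebra_simps)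
  ultimately have "k * d \<le> (T / N + N) * d" by linarith
  then show ?thesis using assms(4) by simp
qed

lemma signless_laplacian_eigenvalue_le:
  assumes sg: "simple_graph n E" and deg1: "\<And>v. v < n \<Longrightarrow> 1 \<le> deg n E v" and n: "2 \<le> n"
    and ev: "eigenvalue (signless_laplacian n E) k"
  shows "k \<le> 2 * real (num_edges n E) / (real n - 1) + real n - 2"
proof -
  obtain x where "eigenvector (signless_laplacian n E) x k"
    using ev unfolding eigenvalue_def by blast
  then obtain u where u: "u < n" and "(k - deg n E u) * deg n E u \<le> neighbour_deg_sum n E u"
    using signless_laplacian_eigenvector_vertex[OF sg deg1] by blast
  then have "k \<le> (2 * real (num_edges n E) - n + 1) / (real n - 1) + (real n - 1)"
    using neighbour_deg_sum_le_num_edges[OF sg deg1 u] neighbour_deg_sum_le_deg_mult[OF sg u]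
      deg1[OF u] deg_le[OF sg u] n
    by (intro le_div_add_of_diff_mult_le) (auto simp: of_nat_diff)
  also have "\<dots> = 2 * real (num_edges n E) / (real n - 1) + real n - 2"
    using n by (simp add: field_simps)
  finally show ?thesis .
qed

lemma q_index_le:
  assumes sg: "simple_graph n E" and deg1: "\<And>v. v < n \<Longrightarrow> 1 \<le> deg n E v" and n: "2 \<le> n"
  shows "q_index n E \<le> 2 * real (num_edges n E) / (real n - 1) + real n - 2"
proof -
  let ?Q = "signless_laplacian n E"
  have "finite {k. eigenvalue ?Q k}"
    using card_finite_spectrum(1)[OF signless_laplacian_carrier] unfolding spectrum_def .
  moreover have "{k. eigenvalue ?Q k} \<noteq> {}"
    using symmetric_mat_has_eigenvalue[OF signless_laplacian_carrier transpose_signless_laplacian[OF sg]] n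
    by auto
  ultimately show ?thesis
    unfolding q_index_def using signless_laplacian_eigenvalue_le[OF sg deg1 n] by simp
qed

lemma sqrt_mult_lt:
  fixes N :: real
  assumes "12 \<le> N"
  shows "sqrt N * (3 * N + 1) < N * (N - 1)"
proof -
  define s where "s = sqrt N"
  have N: "N = s * s" unfolding s_def using assms by simp
  \<comment> \<open>With N = s^2 the claim reads s (s^3 - 3 s^2 - s - 1) > 0, and 173/50 < \<surd>12.\<close>
  have s: "173 / 50 \<le> s" unfolding s_def using assms by (intro real_le_rsqrt) (simp add: power2_eq_square)
  have "s * (173 / 50) * (23 / 50) \<le> s * s * (s - 3)" using s by (intro mult_mono) auto
  then have "0 < s * s * (s - 3) - s - 1" using s by linarith
  then have "0 < s * (s * s * (s - 3) - s - 1)" using s by simp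
  then have "s * (3 * N + 1) < N * (N - 1)" unfolding N by (simp add: algebra_simps)
  then show ?thesis unfolding s_def .
qed

lemma q_bound_mult_sqrt_lt_randic_bound:
  fixes N m :: real
  assumes N: "0 < N" and sb: "sqrt N * (3 * N + 1) < N * (N - 1)" and m: "N < m"
  shows "(2 * m / N + N - 1) * sqrt N
    < (N + 1) * (((N + 1) + (2 * m - (N + 1)) / (sqrt N + 1)) / sqrt N - m / N)"
proof -
  define s where "s = sqrt N"
  have s: "0 < s" "s * s = N" unfolding s_def using N by auto
  define K where "K = N * s * (s + 1)"
  have K: "0 < K" unfolding K_def using N s by simp
  have L: "(2 * m / N + N - 1) * s * K = (2 * m + (N - 1) * N) * s * s * (s + 1)"
    unfolding K_def using N s by (simp add: field_simps)
  have R: "(N + 1) * (((N + 1) + (2 * m - (N + 1)) / (s + 1)) / s - m / N) * K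
      = (N + 1) * (N * ((N + 1) * (s + 1) + 2 * m - (N + 1)) - m * s * (s + 1))"
  proof -
    define X where "X = (N + 1) + (2 * m - (N + 1)) / (s + 1)"
    have XK: "X / s * K = N * (X * (s + 1))" and mK: "m / N * K = m * s * (s + 1)"
      unfolding K_def using N s by (simp_all add: field_simps)
    have X: "X * (s + 1) = (N + 1) * (s + 1) + 2 * m - (N + 1)"
      unfolding X_def using s by (simp add: field_simps)
    have "(N + 1) * (X / s - m / N) * K = (N + 1) * (X / s * K - m / N * K)"
      by (simp add: algebra_simps)
    then show ?thesis unfolding X_def[symmetric] XK mK X .
  qed
  have gap: "(N + 1) * (N * ((N + 1) * (s + 1) + 2 * m - (N + 1)) - m * s * (s + 1))
      - (2 * m + (N - 1) * N) * s * s * (s + 1) = (N * (N - 1) - (3 * N + 1) * s) * (m - N)"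
    unfolding s(2)[symmetric] by (simp add: algebra_simps)
  have "0 < (N * (N - 1) - (3 * N + 1) * s) * (m - N)"
    using sb m unfolding s_def by (intro mult_pos_pos) (auto simp: algebra_simps)
  then have "(2 * m / N + N - 1) * s * K
      < (N + 1) * (((N + 1) + (2 * m - (N + 1)) / (s + 1)) / s - m / N) * K"
    unfolding L R gap[symmetric] by (simp only: diff_gt_0_iff_gt)
  then have "(2 * m / N + N - 1) * s < (N + 1) * (((N + 1) + (2 * m - (N + 1)) / (s + 1)) / s - m / N)"
    using mult_less_cancel_right_pos[OF K] by blast
  then show ?thesis by (simp only: s_def)
qed

lemma divide_lt_divide_of_bounds:
  fixes q R F L a s :: real
  assumes "q \<le> F" "L \<le> R" "0 \<le> F" "F * s < a * L" "0 < s" "0 < a"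
  shows "q / R < a / s"
proof -
  have "0 \<le> F * s" using assms(3,5) by simp
  then have "0 < a * L" using assms(4) by linarith
  then have L: "0 < L" using assms(6) by (simp add: zero_less_mult_iff)
  then have "q / R \<le> F / R" using assms(1,2) by (simp add: divide_right_mono)
  also have "\<dots> \<le> F / L" using assms(2,3) L by (simp add: divide_left_mono)
  also have "\<dots> < a / s" using assms(4,5) L by (simp add: pos_divide_less_eq pos_less_divide_eq mult.commute)
  finally show ?thesis .
qed

theorem q_index_div_randic_lt:
  assumes sg: "simple_graph n E" and c: "connected_graph n E"
    and n: "13 \<le> n" and m: "n \<le> num_edges n E"
  shows "q_index n E / randic n E < real n / sqrt (real n - 1)"
proof -
  define N where "N = real n - 1"
  define M where "M = real (num_edges n E)"
  have deg: "1 \<le> deg n E u \<and> real (deg n E u) \<le> N" if "u < n" for u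
    using deg_ge_1[OF sg c _ that] deg_le[OF sg that] n unfolding N_def by (auto simp: of_nat_diff)
  have q: "q_index n E \<le> 2 * M / N + N - 1"
    using q_index_le[OF sg _ ] deg n unfolding M_def N_def by fastforce
  have R: "(N + 1 + (2 * M - (N + 1)) / (sqrt N + 1)) / sqrt N - M / N \<le> randic n E"
    using randic_ge[OF sg _ deg] n unfolding M_def N_def by simp
  have gap: "(2 * M / N + N - 1) * sqrt N
      < (N + 1) * ((N + 1 + (2 * M - (N + 1)) / (sqrt N + 1)) / sqrt N - M / N)"
    using n m by (intro q_bound_mult_sqrt_lt_randic_bound sqrt_mult_lt) (auto simp: M_def N_def)
  have "0 \<le> 2 * M / N" "1 \<le> N" using n unfolding M_def N_def by auto
  then show ?thesis
    using divide_lt_divide_of_bounds[OF q R _ gap] unfolding N_def by simp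
qed

theorem lemma3p2:
  fixes n m :: nat and E :: "nat \<Rightarrow> nat \<Rightarrow> bool"
  assumes "simple_graph n E" and "connected_graph n E" and "num_edges n E = m"
    and "(n = 13 \<and> 24 \<le> m \<and> m \<le> 78) \<or> (n = 14 \<and> 23 \<le> m \<and> m \<le> 91)"
  shows "q_index n E / randic n E < real n / sqrt (real n - 1)"
  using q_index_div_randic_lt[OF assms(1,2)] assms(3,4) by auto

end
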